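(* Let $n\ge 1$, $w\in S_n$, and let $D^w$ be its rank matrix. Extend it by $D^w_{0,q}=D^w_{p,0}=0$ for all $p,q$. Call a position $(p,q)\in\{1,\dots,n\}^2$ non-redundant if $D^w_{p,q}\neq D^w_{p-1,q}$ and $D^w_{p,q}\neq D^w_{p,q-1}$. Then the number of non-redundant positions $(p,q)$ with $1\le D^w_{p,q}\le n-1$ equals $l(w)+n-1$.
   Context: $S_n$ is the symmetric group and $l(w)$ is the number of inversions of $w$, i.e. $\#\{(i,j): i<j,\ w(i)>w(j)\}$. The rank matrix of $w$ is the $n\times n$ integer matrix $D^w$ with $D^w_{p,q}=\#\{i\in\{1,\dots,n\}: i\le p,\ w(i)\le q\}$. Interpretation: in the product $\prod_{p,q}\mathrm{Gr}_{D^w_{p,q}}(E)$ carrying inclusions $\ell_{p,q}\subset\ell_{p,q+1}$ and $\ell_{p,q}\subset\ell_{p+1,q}$, a factor is redundant exactly when its dimension equals that of its left or upper neighbour. The non-redundant positions with $1\le D^w_{p,q}\le n-1$ are therefore the copies of Grassmannians $\mathrm{Gr}_i$, $1\le i\le n-1$, that remain after eliminating this redundancy. *)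

theory Defs
  imports "HOL-Combinatorics.Permutations"
begin

text \<open>Permutations of \<open>{1..n}\<close> are functions \<open>w :: nat \<Rightarrow> nat\<close> with \<open>w permutes {1..n}\<close>.\<close>

definition inversions :: "nat \<Rightarrow> (nat \<Rightarrow> nat) \<Rightarrow> nat" where
  "inversions n w = card {(i, j). i \<in> {1..n} \<and> j \<in> {1..n} \<and> i < j \<and> w i > w j}"

text \<open>Rank matrix, extended by zero for \<open>p = 0\<close> or \<open>q = 0\<close> (automatic from the formula).\<close>
definition rank_matrix :: "nat \<Rightarrow> (nat \<Rightarrow> nat) \<Rightarrow> nat \<Rightarrow> nat \<Rightarrow> nat" where
  "rank_matrix n w p q = card {i \<in> {1..n}. i \<le> p \<and> w i \<le> q}"

definition non_redundant :: "nat \<Rightarrow> (nat \<Rightarrow> nat) \<Rightarrow> nat \<Rightarrow> nat \<Rightarrow> bool" where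
  "non_redundant n w p q \<longleftrightarrow>
     rank_matrix n w p q \<noteq> rank_matrix n w (p - 1) q \<and>
     rank_matrix n w p q \<noteq> rank_matrix n w p (q - 1)"

end

theory Submission
  imports Defs
begin

text \<open>Moving from row \<open>p - 1\<close> to row \<open>p\<close> adds the entry \<open>p\<close> exactly when \<open>w p \<le> q\<close>, and moving
  from column \<open>q - 1\<close> to column \<open>q\<close> adds the entry \<open>w\<^sup>-\<^sup>1 q\<close> exactly when \<open>w\<^sup>-\<^sup>1 q \<le> p\<close>.
  Hence \<open>(p, q)\<close> is non-redundant iff \<open>w p \<le> q\<close> and \<open>w\<^sup>-\<^sup>1 q \<le> p\<close>, which forces \<open>D\<^sup>w\<^sub>p\<^sub>,\<^sub>q \<ge> 1\<close>;
  among these positions only \<open>(n, n)\<close> has rank \<open>n\<close>. Writing \<open>q = w j\<close>, they correspond to the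
  pairs \<open>j \<le> p\<close> with \<open>w p \<le> w j\<close>: the \<open>n\<close> diagonal pairs and the \<open>l(w)\<close> inversions.\<close>

lemma rank_matrix_row_step:
  assumes "p \<in> {1..n}"
  shows "rank_matrix n w p q = rank_matrix n w (p - 1) q + (if w p \<le> q then 1 else 0)"
proof -
  define B where "B = {i \<in> {1..n}. i \<le> p - 1 \<and> w i \<le> q}"
  have "i \<le> p \<longleftrightarrow> i \<le> p - 1 \<or> i = p" for i
    using assms by auto
  then have "{i \<in> {1..n}. i \<le> p \<and> w i \<le> q} = (if w p \<le> q then insert p B else B)"
    using assms by (auto simp: B_def)
  moreover have "finite B" "p \<notin> B"
    using assms by (auto simp: B_def)
  moreover have "rank_matrix n w (p - 1) q = card B"
    by (simp add: rank_matrix_def B_def)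
  ultimately show ?thesis
    by (simp add: rank_matrix_def)
qed

lemma rank_matrix_col_step:
  assumes w: "w permutes {1..n}" and q: "q \<in> {1..n}"
  shows "rank_matrix n w p q = rank_matrix n w p (q - 1) + (if inv w q \<le> p then 1 else 0)"
proof -
  define B where "B = {i \<in> {1..n}. i \<le> p \<and> w i \<le> q - 1}"
  have "w i \<le> q \<longleftrightarrow> w i \<le> q - 1 \<or> w i = q" for i
    using q by auto
  moreover have "w i = q \<longleftrightarrow> i = inv w q" for i
    using permutes_inverses[OF w] by metis
  ultimately have "w i \<le> q \<longleftrightarrow> w i \<le> q - 1 \<or> i = inv w q" for i
    by blast
  moreover have "inv w q \<in> {1..n}"
    using q by (rule permutes_in_image[OF permutes_inv[OF w], THEN iffD2])
  moreover have fresh: "inv w q \<notin> B"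
    using permutes_inverses(1)[OF w] q by (auto simp: B_def)
  ultimately have "{i \<in> {1..n}. i \<le> p \<and> w i \<le> q} = (if inv w q \<le> p then insert (inv w q) B else B)"
    by (auto simp: B_def)
  moreover have "finite B" "rank_matrix n w p (q - 1) = card B"
    by (simp_all add: rank_matrix_def B_def)
  ultimately show ?thesis
    using fresh by (simp add: rank_matrix_def)
qed

lemma non_redundant_iff:
  assumes "w permutes {1..n}" and "p \<in> {1..n}" and "q \<in> {1..n}"
  shows "non_redundant n w p q \<longleftrightarrow> w p \<le> q \<and> inv w q \<le> p"
proof -
  have "rank_matrix n w p q \<noteq> rank_matrix n w (p - 1) q \<longleftrightarrow> w p \<le> q"
    using rank_matrix_row_step[OF assms(2), of w q] by simp
  moreover have "rank_matrix n w p q \<noteq> rank_matrix n w p (q - 1) \<longleftrightarrow> inv w q \<le> p"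
    using rank_matrix_col_step[OF assms(1,3), of p] by simp
  ultimately show ?thesis
    unfolding non_redundant_def by blast
qed

lemma rank_matrix_le_n: "rank_matrix n w p q \<le> n"
proof -
  have "card {i \<in> {1..n}. i \<le> p \<and> w i \<le> q} \<le> card {1..n}"
    by (rule card_mono) auto
  then show ?thesis
    by (simp add: rank_matrix_def)
qed

lemma rank_matrix_eq_n_iff:
  assumes w: "w permutes {1..n}" and "p \<in> {1..n}" and "q \<in> {1..n}"
  shows "rank_matrix n w p q = n \<longleftrightarrow> p = n \<and> q = n"
proof
  assume "p = n \<and> q = n"
  moreover have "w i \<in> {1..n}" if "i \<in> {1..n}" for i
    using that by (rule permutes_in_image[OF w, THEN iffD2])
  ultimately have "{i \<in> {1..n}. i \<le> p \<and> w i \<le> q} = {1..n}"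
    by auto
  then show "rank_matrix n w p q = n"
    by (simp add: rank_matrix_def)
next
  assume rank: "rank_matrix n w p q = n"
  have "{i \<in> {1..n}. i \<le> p \<and> w i \<le> q} = {1..n}"
    using rank by (intro card_subset_eq) (auto simp: rank_matrix_def)
  moreover have n: "n \<in> {1..n}"
    using assms(2) by simp
  then have "inv w n \<in> {1..n}"
    by (rule permutes_in_image[OF permutes_inv[OF w], THEN iffD2])
  ultimately have "n \<in> {i \<in> {1..n}. i \<le> p \<and> w i \<le> q}"
    and "inv w n \<in> {i \<in> {1..n}. i \<le> p \<and> w i \<le> q}"
    using n by simp_all
  then have "n \<le> p" "w (inv w n) \<le> q"
    by simp_all
  then show "p = n \<and> q = n"
    using assms(2,3) permutes_inverses(1)[OF w] by simp
qed

lemma card_weak_inversions: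
  assumes "inj_on w {1..n}"
  shows "card {(i, j). i \<in> {1..n} \<and> j \<in> {1..n} \<and> j \<le> i \<and> w i \<le> w j} = inversions n w + n"
proof -
  define I where "I = {(i, j). i \<in> {1..n} \<and> j \<in> {1..n} \<and> i < j \<and> w i > w j}"
  have "{(i, j). i \<in> {1..n} \<and> j \<in> {1..n} \<and> j \<le> i \<and> w i \<le> w j} =
        prod.swap ` I \<union> (\<lambda>i. (i, i)) ` {1..n}"
    using assms by (auto simp: I_def inj_on_eq_iff image_iff le_neq_implies_less)
  moreover have "finite I"
    by (rule finite_subset[of _ "{1..n} \<times> {1..n}"]) (auto simp: I_def)
  moreover have "prod.swap ` I \<inter> (\<lambda>i. (i, i)) ` {1..n} = {}"
    by (auto simp: I_def)
  ultimately show ?thesis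
    by (simp add: card_Un_disjoint card_image inj_on_def I_def inversions_def)
qed

lemma card_non_redundant_positions:
  assumes w: "w permutes {1..n}"
  shows "card {(p, q). p \<in> {1..n} \<and> q \<in> {1..n} \<and> w p \<le> q \<and> inv w q \<le> p} = inversions n w + n"
proof -
  define U where "U = {(i, j). i \<in> {1..n} \<and> j \<in> {1..n} \<and> j \<le> i \<and> w i \<le> w j}"
  have "{(p, q). p \<in> {1..n} \<and> q \<in> {1..n} \<and> w p \<le> q \<and> inv w q \<le> p} = map_prod id w ` U"
  proof (intro set_eqI iffI)
    fix x
    assume "x \<in> {(p, q). p \<in> {1..n} \<and> q \<in> {1..n} \<and> w p \<le> q \<and> inv w q \<le> p}"
    then obtain p q where "x = (p, q)" "p \<in> {1..n}" "q \<in> {1..n}" "w p \<le> q" "inv w q \<le> p"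
      by blast
    moreover have "w (inv w q) = q" "inv w q \<in> {1..n}"
      using permutes_inverses(1)[OF w] permutes_in_image[OF permutes_inv[OF w]] \<open>q \<in> {1..n}\<close>
      by blast+
    ultimately show "x \<in> map_prod id w ` U"
      by (intro image_eqI[of _ _ "(p, inv w q)"]) (auto simp: U_def)
  next
    fix x
    assume "x \<in> map_prod id w ` U"
    then obtain i j where "x = (i, w j)" "i \<in> {1..n}" "j \<in> {1..n}" "j \<le> i" "w i \<le> w j"
      by (auto simp: U_def)
    moreover have "inv w (w j) = j" "w j \<in> {1..n}"
      using permutes_inverses(2)[OF w] permutes_in_image[OF w] \<open>j \<in> {1..n}\<close> by blast+
    ultimately show "x \<in> {(p, q). p \<in> {1..n} \<and> q \<in> {1..n} \<and> w p \<le> q \<and> inv w q \<le> p}"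
      by simp
  qed
  also have "card (map_prod id w ` U) = card U"
    by (rule card_image, rule inj_onI) (auto dest: injD[OF permutes_inj[OF w]])
  also have "card U = inversions n w + n"
    unfolding U_def by (rule card_weak_inversions[OF permutes_inj_on[OF w]])
  finally show ?thesis .
qed

theorem proposition2p4:
  fixes n :: nat and w :: "nat \<Rightarrow> nat"
  assumes "n \<ge> 1" and "w permutes {1..n}"
  shows "card {(p, q). p \<in> {1..n} \<and> q \<in> {1..n} \<and> non_redundant n w p q \<and>
                1 \<le> rank_matrix n w p q \<and> rank_matrix n w p q \<le> n - 1}
         = inversions n w + n - 1"
proof -
  let ?T = "{(p, q). p \<in> {1..n} \<and> q \<in> {1..n} \<and> w p \<le> q \<and> inv w q \<le> p}"
  have "1 \<le> rank_matrix n w p q" if "p \<in> {1..n}" "w p \<le> q" for p q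
    using rank_matrix_row_step[OF that(1), of w q] that(2) by simp
  moreover have "rank_matrix n w p q \<le> n - 1 \<longleftrightarrow> (p, q) \<noteq> (n, n)"
    if "p \<in> {1..n}" "q \<in> {1..n}" for p q
    using rank_matrix_le_n[of n w p q] rank_matrix_eq_n_iff[OF assms(2) that] assms(1) by auto
  ultimately have "{(p, q). p \<in> {1..n} \<and> q \<in> {1..n} \<and> non_redundant n w p q \<and>
                1 \<le> rank_matrix n w p q \<and> rank_matrix n w p q \<le> n - 1} = ?T - {(n, n)}"
    using non_redundant_iff[OF assms(2)] by auto
  moreover have "(n, n) \<in> ?T"
    using assms permutes_in_image[OF assms(2), of n] permutes_in_image[OF permutes_inv[OF assms(2)], of n]
    by auto
  moreover have "finite ?T"
    by (rule finite_subset[of _ "{1..n} \<times> {1..n}"]) auto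
  ultimately show ?thesis
    using card_non_redundant_positions[OF assms(2)] by simp
qed

end
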